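(* For all integers $k\ge 1$ and $t\ge 1$, $$B_0(k+1,2t)+B_1(k,2t-1)=B_1(k,2t-2k-1)+p_{de}(2t-k-1)+p_{do}(2t-2k-1).$$
   Context: For a partition $\pi$, $s(\pi)$ is its smallest part. For $j\ge1$, $\mathrm{Spt}j_{do}(n)$ is the set of partitions $\pi$ of $n$ in which $s(\pi)$ occurs exactly $j$ times and the remaining parts (those larger than $s(\pi)$) are pairwise distinct and each has parity different from that of $s(\pi)$. $B_0(j,n)$ (resp. $B_1(j,n)$) is the number of $\pi\in\mathrm{Spt}j_{do}(n)$ whose number of parts greater than $s(\pi)$ is even (resp. odd); $B_0(j,n)=B_1(j,n)=0$ for $n\le 0$. $p_{de}(n)$ (resp. $p_{do}(n)$) is the number of partitions of $n$ into distinct even (resp. distinct odd) parts, with value $1$ at $n=0$ and $0$ for $n<0$. *)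

theory Defs
  imports Main "HOL-Library.Multiset"
begin

definition partitions :: "nat \<Rightarrow> nat multiset set" where
  "partitions n = {p. (\<forall>x\<in>#p. 0 < x) \<and> sum_mset p = n}"

text \<open>Smallest part s(pi) (meaningful for nonempty partitions).\<close>
definition spart :: "nat multiset \<Rightarrow> nat" where
  "spart p = Min (set_mset p)"

definition Spt_do :: "nat \<Rightarrow> nat \<Rightarrow> nat multiset set" where
  "Spt_do j n = {p \<in> partitions n. p \<noteq> {#} \<and>
      count p (spart p) = j \<and>
      (\<forall>x\<in>#p. spart p < x \<longrightarrow> count p x = 1 \<and> (odd x \<longleftrightarrow> even (spart p)))}"

definition nbig :: "nat multiset \<Rightarrow> nat" where
  "nbig p = size (filter_mset (\<lambda>x. spart p < x) p)"

definition B0 :: "nat \<Rightarrow> int \<Rightarrow> nat" where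
  "B0 j n = (if n \<le> 0 then 0 else card {p \<in> Spt_do j (nat n). even (nbig p)})"

definition B1 :: "nat \<Rightarrow> int \<Rightarrow> nat" where
  "B1 j n = (if n \<le> 0 then 0 else card {p \<in> Spt_do j (nat n). odd (nbig p)})"

definition pde :: "int \<Rightarrow> nat" where
  "pde n = (if n < 0 then 0 else
     card {p \<in> partitions (nat n). (\<forall>x\<in>#p. even x \<and> count p x = 1)})"

definition pdo :: "int \<Rightarrow> nat" where
  "pdo n = (if n < 0 then 0 else
     card {p \<in> partitions (nat n). (\<forall>x\<in>#p. odd x \<and> count p x = 1)})"

end

theory Submission
  imports Defs
begin

text \<open>A partition in \<open>Spt j_do(n)\<close> amounts to a pair \<open>(s, B)\<close>: its smallest part \<open>s\<close>, taken
  \<open>j\<close> times, and the set \<open>B\<close> of its larger parts, all of parity opposite to \<open>s\<close>, with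
  \<open>j s + \<Sum>B = n\<close>; \<open>B\<^sub>0\<close> and \<open>B\<^sub>1\<close> count these pairs by the parity of \<open>|B|\<close>. Sort the pairs
  counted on the left by \<open>s\<close>.
  For \<open>s = 1\<close>, \<open>B\<close> is a set of distinct even parts of sum \<open>2t - k - 1\<close>, and the two terms
  together count all such sets, of either parity.
  For \<open>s = 2\<close>, \<open>B\<close> is a set of distinct odd parts greater than \<open>1\<close>, so the parity of \<open>|B|\<close> is
  forced by the sum; the two terms count the partitions of \<open>2t - 2k - 1\<close> into distinct odd parts
  without the part \<open>1\<close> and, after adding it, those with it.
  For \<open>s \<ge> 3\<close>, lowering the \<open>k\<close> copies of \<open>s\<close> by \<open>2\<close> maps the pairs of \<open>B\<^sub>1(k, 2t - 1)\<close> onto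
  the pairs \<open>(s, B)\<close> of \<open>B\<^sub>1(k, 2t - 2k - 1)\<close> with \<open>s + 1 \<notin> B\<close>; lowering \<open>k\<close> of the \<open>k + 1\<close>
  copies by \<open>2\<close> and the last one by \<open>1\<close> maps the pairs of \<open>B\<^sub>0(k + 1, 2t)\<close> onto those with
  \<open>s + 1 \<in> B\<close>. When \<open>t \<le> k\<close>, only \<open>s = 1\<close> occurs.\<close>

lemma card_filter_partition:
  assumes "finite A"
  shows "card {x \<in> A. P x} = card {x \<in> A. R x \<and> P x} + card {x \<in> A. \<not> R x \<and> P x}"
proof -
  have "{x \<in> A. P x} = {x \<in> A. R x \<and> P x} \<union> {x \<in> A. \<not> R x \<and> P x}"
    by blast
  also have "card \<dots> = card {x \<in> A. R x \<and> P x} + card {x \<in> A. \<not> R x \<and> P x}"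
    using assms by (simp add: card_Un_disjoint disjoint_iff)
  finally show ?thesis .
qed

lemma card_filter_split_one_two:
  fixes f :: "'a \<Rightarrow> nat"
  assumes "finite A" "\<forall>x\<in>A. 0 < f x"
  shows "card {x \<in> A. Q x} = card {x \<in> A. f x = 1 \<and> Q x} + card {x \<in> A. f x = 2 \<and> Q x}
    + card {x \<in> A. 3 \<le> f x \<and> Q x}"
proof -
  have "{x \<in> A. \<not> f x = 1 \<and> Q x} = {x \<in> A. 2 \<le> f x \<and> Q x}"
    using assms(2) by force
  moreover have "{x \<in> A. f x = 2 \<and> 2 \<le> f x \<and> Q x} = {x \<in> A. f x = 2 \<and> Q x}"
    "{x \<in> A. \<not> f x = 2 \<and> 2 \<le> f x \<and> Q x} = {x \<in> A. 3 \<le> f x \<and> Q x}"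
    by auto
  ultimately show ?thesis
    using card_filter_partition[OF assms(1), of Q "\<lambda>x. f x = 1"]
      card_filter_partition[OF assms(1), of "\<lambda>x. 2 \<le> f x \<and> Q x" "\<lambda>x. f x = 2"]
    by simp
qed

lemma card_fst_slice:
  "card {x \<in> A. fst x = a \<and> Q (snd x)} = card {b. (a, b) \<in> A \<and> Q b}"
proof -
  have "{x \<in> A. fst x = a \<and> Q (snd x)} = Pair a ` {b. (a, b) \<in> A \<and> Q b}"
    by force
  then show ?thesis
    by (simp add: card_image inj_on_def)
qed

definition spt_pairs :: "nat \<Rightarrow> nat \<Rightarrow> (nat \<times> nat set) set" where
  "spt_pairs j n = {(s, B). 0 < s \<and> finite B \<and> (\<forall>x\<in>B. s < x \<and> (odd x \<longleftrightarrow> even s))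
      \<and> j * s + \<Sum>B = n}"

definition spt_mset :: "nat \<Rightarrow> nat \<times> nat set \<Rightarrow> nat multiset" where
  "spt_mset j = (\<lambda>(s, B). replicate_mset j s + mset_set B)"

definition spt_split :: "nat multiset \<Rightarrow> nat \<times> nat set" where
  "spt_split p = (spart p, set_mset p - {spart p})"

lemma spt_pairs_zero: "0 < j \<Longrightarrow> spt_pairs j 0 = {}"
  by (auto simp: spt_pairs_def)

lemma spt_pairs_fst_pos: "x \<in> spt_pairs j n \<Longrightarrow> 0 < fst x"
  by (cases x) (simp add: spt_pairs_def)

lemma finite_spt_pairs:
  assumes "0 < j"
  shows "finite (spt_pairs j n)"
proof (rule finite_subset)
  show "spt_pairs j n \<subseteq> {..n} \<times> Pow {..n}"
  proof clarify
    fix s B assume "(s, B) \<in> spt_pairs j n"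
    then have "s \<le> j * s" "finite B" and sum: "j * s + \<Sum>B = n"
      using assms by (simp_all add: spt_pairs_def)
    then have "s \<le> n"
      by linarith
    moreover have "x \<le> n" if "x \<in> B" for x
      using member_le_sum[OF that _ \<open>finite B\<close>, of "\<lambda>x. x"] sum by linarith
    ultimately show "s \<in> {..n} \<and> B \<in> Pow {..n}"
      by auto
  qed
qed auto

lemma spt_mset_simps:
  assumes "0 < j" "finite B" "\<forall>x\<in>B. s < x"
  shows "set_mset (spt_mset j (s, B)) = insert s B"
    and "spart (spt_mset j (s, B)) = s"
    and "nbig (spt_mset j (s, B)) = card B"
proof -
  show set: "set_mset (spt_mset j (s, B)) = insert s B"
    using assms by (auto simp: spt_mset_def)
  show spart: "spart (spt_mset j (s, B)) = s"
    unfolding spart_def set using assms by (intro Min_eqI) force+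
  have "filter_mset (\<lambda>x. s < x) (spt_mset j (s, B)) = mset_set B"
    using assms by (auto simp: spt_mset_def count_mset_set' intro!: multiset_eqI)
  then show "nbig (spt_mset j (s, B)) = card B"
    by (simp add: nbig_def spart)
qed

lemma count_spt_mset:
  assumes "finite B" "\<forall>x\<in>B. s < x"
  shows "count (spt_mset j (s, B)) x = (if x = s then j else if x \<in> B then 1 else 0)"
  using assms by (auto simp: spt_mset_def)

lemma sum_mset_spt_mset:
  assumes "finite B"
  shows "sum_mset (spt_mset j (s, B)) = j * s + \<Sum>B"
  using assms by (simp add: spt_mset_def sum_unfold_sum_mset)

lemma spt_mset_spt_split:
  assumes "p \<in> Spt_do j n"
  shows "spt_mset j (spt_split p) = p"
proof (rule multiset_eqI)
  fix x
  have le: "spart p \<le> x" if "x \<in># p" for x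
    using that by (simp add: spart_def)
  have "count p x = 1" if "x \<in># p" "x \<noteq> spart p"
    using assms le[OF that(1)] that unfolding Spt_do_def by auto
  moreover have "count p (spart p) = j"
    using assms unfolding Spt_do_def by blast
  moreover have "\<forall>y\<in>set_mset p - {spart p}. spart p < y"
    using le by force
  ultimately show "count (spt_mset j (spt_split p)) x = count p x"
    unfolding spt_split_def by (subst count_spt_mset) (auto simp: count_eq_zero_iff)
qed

lemma spt_split_spt_mset:
  "0 < j \<Longrightarrow> x \<in> spt_pairs j n \<Longrightarrow> spt_split (spt_mset j x) = x"
  by (cases x) (force simp: spt_pairs_def spt_split_def spt_mset_simps)

lemma spt_mset_in_Spt_do:
  assumes "0 < j" "(s, B) \<in> spt_pairs j n"
  shows "spt_mset j (s, B) \<in> Spt_do j n"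
proof -
  from assms(2) have s: "0 < s" and fin: "finite B" and big: "\<forall>x\<in>B. s < x"
    and par: "\<forall>x\<in>B. odd x \<longleftrightarrow> even s" and sum: "j * s + \<Sum>B = n"
    by (auto simp: spt_pairs_def)
  note simps = spt_mset_simps[OF assms(1) fin big] count_spt_mset[OF fin big]
    sum_mset_spt_mset[OF fin]
  have "spt_mset j (s, B) \<in> partitions n"
    using s big sum by (auto simp: partitions_def simps)
  moreover have "spt_mset j (s, B) \<noteq> {#}"
    using simps(1) by (metis empty_not_insert set_mset_empty)
  ultimately show ?thesis
    using big par by (auto simp: Spt_do_def simps)
qed

lemma spt_split_in_spt_pairs:
  assumes p: "p \<in> Spt_do j n"
  shows "spt_split p \<in> spt_pairs j n"
proof -
  define s B where "s = spart p" and "B = set_mset p - {spart p}"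
  have split: "spt_split p = (s, B)"
    by (simp add: spt_split_def s_def B_def)
  have "p \<noteq> {#}" and pos: "\<forall>x\<in>#p. 0 < x"
    using p by (auto simp: Spt_do_def partitions_def)
  then have "s \<in># p"
    by (simp add: s_def spart_def)
  have "\<forall>x\<in>#p. s \<le> x"
    by (simp add: s_def spart_def)
  then have big: "\<forall>x\<in>B. s < x"
    by (force simp: B_def s_def)
  have fin: "finite B"
    by (simp add: B_def)
  have "j * s + \<Sum>B = sum_mset (spt_mset j (spt_split p))"
    using fin by (simp add: split sum_mset_spt_mset)
  also have "\<dots> = n"
    using p by (simp add: spt_mset_spt_split Spt_do_def partitions_def)
  finally have "j * s + \<Sum>B = n" .
  moreover have "odd x \<longleftrightarrow> even s" if "x \<in> B" for x
  proof -
    have "x \<in># p" "spart p < x"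
      using that big by (auto simp: B_def s_def)
    then show ?thesis
      using p unfolding Spt_do_def s_def by blast
  qed
  ultimately show ?thesis
    unfolding split using \<open>s \<in># p\<close> pos big fin by (auto simp: spt_pairs_def)
qed

lemma bij_betw_spt_mset:
  assumes "0 < j"
  shows "bij_betw (spt_mset j) {x \<in> spt_pairs j n. P (card (snd x))} {p \<in> Spt_do j n. P (nbig p)}"
proof (rule bij_betw_byWitness[where f' = spt_split])
  have nbig: "nbig (spt_mset j x) = card (snd x)" if "x \<in> spt_pairs j n" for x
    using that assms by (cases x) (simp add: spt_pairs_def spt_mset_simps)
  show "\<forall>x\<in>{x \<in> spt_pairs j n. P (card (snd x))}. spt_split (spt_mset j x) = x"
    using spt_split_spt_mset[OF assms] by blast
  show "\<forall>p\<in>{p \<in> Spt_do j n. P (nbig p)}. spt_mset j (spt_split p) = p"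
    using spt_mset_spt_split by blast
  show "spt_mset j ` {x \<in> spt_pairs j n. P (card (snd x))} \<subseteq> {p \<in> Spt_do j n. P (nbig p)}"
    using spt_mset_in_Spt_do[OF assms] nbig by auto
  show "spt_split ` {p \<in> Spt_do j n. P (nbig p)} \<subseteq> {x \<in> spt_pairs j n. P (card (snd x))}"
  proof
    fix x assume "x \<in> spt_split ` {p \<in> Spt_do j n. P (nbig p)}"
    then obtain p where p: "p \<in> Spt_do j n" "P (nbig p)" and x: "x = spt_split p"
      by auto
    from p(1) have "x \<in> spt_pairs j n"
      unfolding x by (rule spt_split_in_spt_pairs)
    moreover have "nbig p = card (snd x)"
      using nbig[OF calculation] spt_mset_spt_split[OF p(1)] x by simp
    ultimately show "x \<in> {x \<in> spt_pairs j n. P (card (snd x))}"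
      using p(2) by simp
  qed
qed

lemma B0_eq_card_spt_pairs:
  "0 < j \<Longrightarrow> B0 j n = card {x \<in> spt_pairs j (nat n). even (card (snd x))}"
  using bij_betw_same_card[OF bij_betw_spt_mset, of j "nat n" even]
  by (cases "n \<le> 0") (simp_all add: B0_def spt_pairs_zero)

lemma B1_eq_card_spt_pairs:
  "0 < j \<Longrightarrow> B1 j n = card {x \<in> spt_pairs j (nat n). odd (card (snd x))}"
  using bij_betw_same_card[OF bij_betw_spt_mset, of j "nat n" odd]
  by (cases "n \<le> 0") (simp_all add: B1_def spt_pairs_zero)

definition distinct_parts :: "(nat \<Rightarrow> bool) \<Rightarrow> nat \<Rightarrow> nat set set" where
  "distinct_parts P n = {B. finite B \<and> (\<forall>x\<in>B. 0 < x \<and> P x) \<and> \<Sum>B = n}"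

lemma bij_betw_mset_set_distinct_parts:
  "bij_betw mset_set (distinct_parts P n) {p \<in> partitions n. \<forall>x\<in>#p. P x \<and> count p x = 1}"
proof (rule bij_betw_byWitness[where f' = set_mset])
  have mset_set_set_mset: "mset_set (set_mset p) = p" if "\<forall>x\<in>#p. count p x = 1" for p :: "nat multiset"
    using that by (intro multiset_eqI) (auto simp: count_mset_set' count_eq_zero_iff)
  then show "\<forall>p\<in>{p \<in> partitions n. \<forall>x\<in>#p. P x \<and> count p x = 1}. mset_set (set_mset p) = p"
    by blast
  show "\<forall>B\<in>distinct_parts P n. set_mset (mset_set B) = B"
    by (simp add: distinct_parts_def)
  show "mset_set ` distinct_parts P n \<subseteq> {p \<in> partitions n. \<forall>x\<in>#p. P x \<and> count p x = 1}"
    by (auto simp: distinct_parts_def partitions_def sum_unfold_sum_mset)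
  show "set_mset ` {p \<in> partitions n. \<forall>x\<in>#p. P x \<and> count p x = 1} \<subseteq> distinct_parts P n"
    using mset_set_set_mset
    by (auto simp: distinct_parts_def partitions_def sum_unfold_sum_mset)
qed

lemma pde_eq_card_distinct_parts: "0 \<le> n \<Longrightarrow> pde n = card (distinct_parts even (nat n))"
  using bij_betw_same_card[OF bij_betw_mset_set_distinct_parts] by (simp add: pde_def)

lemma pdo_eq_card_distinct_parts: "0 \<le> n \<Longrightarrow> pdo n = card (distinct_parts odd (nat n))"
  using bij_betw_same_card[OF bij_betw_mset_set_distinct_parts] by (simp add: pdo_def)

lemma finite_distinct_parts: "finite (distinct_parts P n)"
proof (rule finite_subset)
  show "distinct_parts P n \<subseteq> Pow {..n}"
    by (auto simp: distinct_parts_def) (metis member_le_sum zero_le)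
qed auto

lemma even_card_iff_even_sum:
  "finite B \<Longrightarrow> \<forall>x\<in>B. odd (x :: nat) \<Longrightarrow> even (card B) \<longleftrightarrow> even (\<Sum>B)"
  by (induction B rule: finite_induct) auto

lemma distinct_parts_odd_card_parity:
  "B \<in> distinct_parts odd m \<Longrightarrow> even (card B) \<longleftrightarrow> even m"
  using even_card_iff_even_sum by (auto simp: distinct_parts_def)

lemma card_distinct_parts_odd_Suc:
  "card (distinct_parts odd (Suc m))
    = card {B \<in> distinct_parts odd (Suc m). 1 \<notin> B} + card {B \<in> distinct_parts odd m. 1 \<notin> B}"
proof -
  have "{B \<in> distinct_parts odd (Suc m). 1 \<in> B} = insert 1 ` {B \<in> distinct_parts odd m. 1 \<notin> B}"
  proof (intro equalityI subsetI)
    fix B assume "B \<in> {B \<in> distinct_parts odd (Suc m). 1 \<in> B}"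
    then have B: "finite B" "1 \<in> B" "\<forall>x\<in>B. odd x" "\<Sum>B = Suc m"
      by (simp_all add: distinct_parts_def)
    then have "\<Sum>(B - {1}) = m"
      by (simp add: sum.remove)
    with B have "B - {1} \<in> {B \<in> distinct_parts odd m. 1 \<notin> B}"
      by (simp add: distinct_parts_def odd_pos)
    moreover have "B = insert 1 (B - {1})"
      using B(2) by blast
    ultimately show "B \<in> insert 1 ` {B \<in> distinct_parts odd m. 1 \<notin> B}"
      by (rule rev_image_eqI)
  next
    fix B assume "B \<in> insert 1 ` {B \<in> distinct_parts odd m. 1 \<notin> B}"
    then obtain C where "B = insert 1 C" "finite C" "1 \<notin> C" "\<forall>x\<in>C. odd x" "\<Sum>C = m"
      by (auto simp: distinct_parts_def)
    then show "B \<in> {B \<in> distinct_parts odd (Suc m). 1 \<in> B}"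
      by (simp add: distinct_parts_def odd_pos)
  qed
  moreover have "inj_on (insert 1) {B \<in> distinct_parts odd m. 1 \<notin> B}"
    by (rule inj_onI) (metis (mono_tags) Diff_insert_absorb mem_Collect_eq)
  ultimately have "card {B \<in> distinct_parts odd (Suc m). 1 \<in> B} = card {B \<in> distinct_parts odd m. 1 \<notin> B}"
    by (simp add: card_image)
  moreover have "finite (distinct_parts odd (Suc m))"
    by (rule finite_distinct_parts)
  ultimately show ?thesis
    using card_filter_partition[of "distinct_parts odd (Suc m)" "\<lambda>_. True" "\<lambda>B. 1 \<notin> B"]
    by simp
qed

lemma card_spt_pairs_smallest_one:
  "card {x \<in> spt_pairs j (m + j). fst x = 1 \<and> P (card (snd x))}
    = card {B \<in> distinct_parts even m. P (card B)}"
proof -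
  have "(1 < x \<and> even x) \<longleftrightarrow> (0 < x \<and> even x)" for x :: nat
    by auto
  then have "(1, B) \<in> spt_pairs j (m + j) \<longleftrightarrow> B \<in> distinct_parts even m" for B
    by (simp add: spt_pairs_def distinct_parts_def)
  then show ?thesis
    by (subst card_fst_slice) simp
qed

lemma card_spt_pairs_smallest_two:
  "card {x \<in> spt_pairs j (m + 2 * j). fst x = 2 \<and> P (card (snd x))}
    = card {B \<in> distinct_parts odd m. 1 \<notin> B \<and> P (card B)}"
proof -
  have "(2 < x \<and> odd x) \<longleftrightarrow> (0 < x \<and> odd x) \<and> x \<noteq> 1" for x :: nat
    by presburger
  then have "(\<forall>x\<in>B. 2 < x \<and> odd x) \<longleftrightarrow> (\<forall>x\<in>B. 0 < x \<and> odd x) \<and> 1 \<notin> B" for B :: "nat set"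
    by blast
  then have "(2, B) \<in> spt_pairs j (m + 2 * j) \<longleftrightarrow> B \<in> distinct_parts odd m \<and> 1 \<notin> B" for B
    by (auto simp: spt_pairs_def distinct_parts_def)
  then show ?thesis
    by (subst card_fst_slice) (simp add: conj_assoc)
qed

lemma spt_pairs_shift_iff:
  assumes "0 < s"
  shows "(s + 2, B) \<in> spt_pairs j (m + 2 * j) \<longleftrightarrow> (s, B) \<in> spt_pairs j m \<and> Suc s \<notin> B"
proof -
  have "(s + 2 < x \<and> (odd x \<longleftrightarrow> even (s + 2))) \<longleftrightarrow> (s < x \<and> (odd x \<longleftrightarrow> even s)) \<and> x \<noteq> Suc s"
    for x :: nat
    by presburger
  then show ?thesis
    using assms by (auto simp: spt_pairs_def algebra_simps)
qed

lemma spt_pairs_shift_insert_iff: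
  assumes "0 < s" "Suc s \<notin> B"
  shows "(s + 2, B) \<in> spt_pairs (Suc j) (m + 2 * j + 1) \<longleftrightarrow> (s, insert (Suc s) B) \<in> spt_pairs j m"
proof -
  have "(s + 2 < x \<and> (odd x \<longleftrightarrow> even (s + 2))) \<longleftrightarrow> (s < x \<and> (odd x \<longleftrightarrow> even s))"
    if "x \<in> B" for x :: nat
  proof -
    have "x \<noteq> Suc s"
      using that assms(2) by blast
    then show ?thesis
      by presburger
  qed
  then show ?thesis
    using assms by (auto simp: spt_pairs_def algebra_simps)
qed

lemma card_spt_pairs_shift:
  "card {x \<in> spt_pairs j (m + 2 * j). 3 \<le> fst x \<and> P (card (snd x))}
    = card {x \<in> spt_pairs j m. Suc (fst x) \<notin> snd x \<and> P (card (snd x))}"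
  (is "card ?L = card ?R")
proof -
  let ?f = "\<lambda>(s, B). (s + 2, B :: nat set)"
  have "?L = ?f ` ?R"
  proof (intro equalityI subsetI)
    fix x assume x: "x \<in> ?L"
    then obtain s B where sB: "x = (s + 2, B)" "0 < s"
      by (intro that[of "fst x - 2" "snd x"]) (auto simp: prod_eq_iff)
    then have "(s, B) \<in> ?R"
      using x spt_pairs_shift_iff[of s B j m] by simp
    then show "x \<in> ?f ` ?R"
      using sB(1) by force
  next
    fix x assume "x \<in> ?f ` ?R"
    then obtain s B where "x = (s + 2, B)" "(s, B) \<in> ?R"
      by auto
    then show "x \<in> ?L"
      using spt_pairs_shift_iff[of s B j m] spt_pairs_fst_pos[of "(s, B)" j m] by simp
  qed
  moreover have "inj_on ?f ?R"
    by (auto simp: inj_on_def)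
  ultimately show ?thesis
    by (simp add: card_image)
qed

lemma card_spt_pairs_shift_insert:
  "card {x \<in> spt_pairs (Suc j) (m + 2 * j + 1). 3 \<le> fst x \<and> P (Suc (card (snd x)))}
    = card {x \<in> spt_pairs j m. Suc (fst x) \<in> snd x \<and> P (card (snd x))}"
  (is "card ?L = card ?R")
proof -
  let ?f = "\<lambda>(s, B). (s + 2, B - {Suc s} :: nat set)"
  have "?L = ?f ` ?R"
  proof (intro equalityI subsetI)
    fix x assume x: "x \<in> ?L"
    then obtain s B where sB: "x = (s + 2, B)" "0 < s"
      by (intro that[of "fst x - 2" "snd x"]) (auto simp: prod_eq_iff)
    with x have L: "(s + 2, B) \<in> spt_pairs (Suc j) (m + 2 * j + 1)" "P (Suc (card B))"
      by simp_all
    then have "\<forall>y\<in>B. s + 2 < y" "finite B"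
      by (simp_all add: spt_pairs_def)
    then have "Suc s \<notin> B"
      by auto
    with L sB(2) have "(s, insert (Suc s) B) \<in> ?R"
      using spt_pairs_shift_insert_iff[of s B j m] \<open>finite B\<close> by simp
    moreover have "x = ?f (s, insert (Suc s) B)"
      using sB(1) \<open>Suc s \<notin> B\<close> by simp
    ultimately show "x \<in> ?f ` ?R"
      by blast
  next
    fix x assume "x \<in> ?f ` ?R"
    then obtain s C where x: "x = (s + 2, C - {Suc s})" and R: "(s, C) \<in> spt_pairs j m"
      "Suc s \<in> C" "P (card C)"
      by auto
    then have "insert (Suc s) (C - {Suc s}) = C" "0 < s" "finite C"
      by (auto simp: spt_pairs_def)
    moreover have "Suc (card (C - {Suc s})) = card C"
      using \<open>finite C\<close> R(2) by (rule card_Suc_Diff1)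
    ultimately show "x \<in> ?L"
      using x R spt_pairs_shift_insert_iff[of s "C - {Suc s}" j m] by simp
  qed
  moreover have "inj_on ?f ?R"
    by (auto simp: inj_on_def)
  ultimately show ?thesis
    by (simp add: card_image)
qed

lemma card_spt_pairs_split:
  assumes "0 < j"
  shows "card {x \<in> spt_pairs j n. Q x} = card {x \<in> spt_pairs j n. fst x = 1 \<and> Q x}
    + card {x \<in> spt_pairs j n. fst x = 2 \<and> Q x} + card {x \<in> spt_pairs j n. 3 \<le> fst x \<and> Q x}"
  using finite_spt_pairs[OF assms] spt_pairs_fst_pos by (intro card_filter_split_one_two) auto

lemma card_spt_pairs_identity:
  assumes "0 < j"
  shows "card {x \<in> spt_pairs (Suc j) (2 * r + 2 * j + 2). even (card (snd x))}
      + card {x \<in> spt_pairs j (2 * r + 2 * j + 1). odd (card (snd x))}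
    = card {x \<in> spt_pairs j (2 * r + 1). odd (card (snd x))}
      + card (distinct_parts even (2 * r + j + 1)) + card (distinct_parts odd (2 * r + 1))"
proof -
  have e: "2 * r + 2 * j + 2 = (2 * r + j + 1) + Suc j" "2 * r + 2 * j + 1 = (2 * r + j + 1) + j"
    "2 * r + 2 * j + 2 = 2 * r + 2 * Suc j" "2 * r + 2 * j + 1 = (2 * r + 1) + 2 * j"
    "2 * r + 2 * j + 2 = (2 * r + 1) + 2 * j + 1"
    by simp_all
  note one = card_spt_pairs_smallest_one[of "Suc j" "2 * r + j + 1" even, folded e(1)]
    card_spt_pairs_smallest_one[of j "2 * r + j + 1" odd, folded e(2)]
  note two = card_spt_pairs_smallest_two[of "Suc j" "2 * r" even, folded e(3)]
    card_spt_pairs_smallest_two[of j "2 * r + 1" odd, folded e(4)]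
  note three = card_spt_pairs_shift_insert[of j "2 * r + 1" odd, folded e(5)]
    card_spt_pairs_shift[of j "2 * r + 1" odd, folded e(4)]
  have "card {x \<in> spt_pairs (Suc j) (2 * r + 2 * j + 2). fst x = 1 \<and> even (card (snd x))}
      + card {x \<in> spt_pairs j (2 * r + 2 * j + 1). fst x = 1 \<and> odd (card (snd x))}
    = card (distinct_parts even (2 * r + j + 1))"
    using one finite_distinct_parts
      card_filter_partition[of "distinct_parts even (2 * r + j + 1)" "\<lambda>_. True" "\<lambda>B. even (card B)"]
    by simp
  moreover have "card {x \<in> spt_pairs (Suc j) (2 * r + 2 * j + 2). fst x = 2 \<and> even (card (snd x))}
      + card {x \<in> spt_pairs j (2 * r + 2 * j + 1). fst x = 2 \<and> odd (card (snd x))}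
    = card (distinct_parts odd (2 * r + 1))"
  proof -
    have "{B \<in> distinct_parts odd (2 * r). 1 \<notin> B \<and> even (card B)} = {B \<in> distinct_parts odd (2 * r). 1 \<notin> B}"
      "{B \<in> distinct_parts odd (2 * r + 1). 1 \<notin> B \<and> odd (card B)}
        = {B \<in> distinct_parts odd (2 * r + 1). 1 \<notin> B}"
      using distinct_parts_odd_card_parity by auto
    then show ?thesis
      using two card_distinct_parts_odd_Suc[of "2 * r"] by simp
  qed
  moreover have "card {x \<in> spt_pairs (Suc j) (2 * r + 2 * j + 2). 3 \<le> fst x \<and> even (card (snd x))}
      + card {x \<in> spt_pairs j (2 * r + 2 * j + 1). 3 \<le> fst x \<and> odd (card (snd x))}
    = card {x \<in> spt_pairs j (2 * r + 1). odd (card (snd x))}"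
    using three finite_spt_pairs[OF assms] card_filter_partition[of "spt_pairs j (2 * r + 1)"
        "\<lambda>x. odd (card (snd x))" "\<lambda>x. Suc (fst x) \<in> snd x"]
    by simp
  ultimately show ?thesis
    using card_spt_pairs_split[of "Suc j" "2 * r + 2 * j + 2" "\<lambda>x. even (card (snd x))"]
      card_spt_pairs_split[OF assms, of "2 * r + 2 * j + 1" "\<lambda>x. odd (card (snd x))"]
    by simp
qed

lemma card_spt_pairs_below_double:
  assumes "0 < j" "n < 2 * j"
  shows "card {x \<in> spt_pairs j n. P (card (snd x))}
    = (if j \<le> n then card {B \<in> distinct_parts even (n - j). P (card B)} else 0)"
proof -
  have "fst x = 1 \<and> j \<le> n" if "x \<in> spt_pairs j n" for x
  proof -
    obtain s B where x: "x = (s, B)"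
      by fastforce
    with that have "0 < s" "j * s \<le> n"
      by (auto simp: spt_pairs_def)
    moreover have "s = 1"
    proof (rule ccontr)
      assume "s \<noteq> 1"
      with \<open>0 < s\<close> have "j * 2 \<le> j * s"
        by simp
      with \<open>j * s \<le> n\<close> assms(2) show False
        by linarith
    qed
    ultimately show ?thesis
      using x by simp
  qed
  then have "{x \<in> spt_pairs j n. P (card (snd x))} = {x \<in> spt_pairs j n. fst x = 1 \<and> P (card (snd x))}"
    "\<not> j \<le> n \<Longrightarrow> spt_pairs j n = {}"
    by auto
  moreover have "j \<le> n \<Longrightarrow> n = (n - j) + j"
    by simp
  ultimately show ?thesis
    using card_spt_pairs_smallest_one[of j "n - j" P] by auto
qed

lemma B0_B1_identity_small:
  assumes "0 < j" "0 < T" "T \<le> j"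
  shows "B0 (Suc j) (2 * int T) + B1 j (2 * int T - 1) = pde (2 * int T - int j - 1)"
proof -
  have nats: "nat (2 * int T) = 2 * T" "nat (2 * int T - 1) = 2 * T - 1"
    using assms(2) by simp_all
  have below: "2 * T < 2 * Suc j" "2 * T - 1 < 2 * j"
    using assms by simp_all
  note counts = B0_eq_card_spt_pairs[OF zero_less_Suc] B1_eq_card_spt_pairs[OF assms(1)] nats
    card_spt_pairs_below_double[OF zero_less_Suc below(1), of even]
    card_spt_pairs_below_double[OF assms(1) below(2), of odd]
  show ?thesis
  proof (cases "Suc j \<le> 2 * T")
    case True
    then have "0 \<le> 2 * int T - int j - 1" "nat (2 * int T - int j - 1) = 2 * T - Suc j"
      by simp_all
    then show ?thesis
      using True card_filter_partition[of "distinct_parts even (2 * T - Suc j)" "\<lambda>_. True" "\<lambda>B. even (card B)"]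
      unfolding counts by (simp add: finite_distinct_parts pde_eq_card_distinct_parts)
  next
    case False
    with assms(2) show ?thesis
      unfolding counts by (simp add: pde_def)
  qed
qed

theorem lemma2:
  fixes k t :: int
  assumes "k \<ge> 1" and "t \<ge> 1"
  shows "B0 (nat (k + 1)) (2*t) + B1 (nat k) (2*t - 1)
       = B1 (nat k) (2*t - 2*k - 1) + pde (2*t - k - 1) + pdo (2*t - 2*k - 1)"
proof -
  obtain K T where k: "k = int K" and t: "t = int T" and "0 < K" "0 < T"
    using assms by (metis nonneg_int_cases int_one_le_iff_zero_less order_trans zero_le_one of_nat_0_less_iff)
  show ?thesis
  proof (cases "K < T")
    case True
    then obtain r where "T = r + K + 1"
      by (metis add.commute add_Suc_right less_imp_Suc_add Suc_eq_plus1)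
    then have "nat (k + 1) = Suc K" "nat k = K" "nat (2 * t) = 2 * r + 2 * K + 2"
      "nat (2 * t - 1) = 2 * r + 2 * K + 1" "nat (2 * t - 2 * k - 1) = 2 * r + 1"
      "nat (2 * t - k - 1) = 2 * r + K + 1" "0 \<le> 2 * t - 2 * k - 1" "0 \<le> 2 * t - k - 1"
      using k t by simp_all
    then show ?thesis
      using card_spt_pairs_identity[OF \<open>0 < K\<close>, of r]
      by (simp only: B0_eq_card_spt_pairs[OF zero_less_Suc] B1_eq_card_spt_pairs[OF \<open>0 < K\<close>]
        pde_eq_card_distinct_parts pdo_eq_card_distinct_parts)
  next
    case False
    then have "B1 K (2 * t - 2 * k - 1) = 0" "pdo (2 * t - 2 * k - 1) = 0" "nat (k + 1) = Suc K"
      using k t by (simp_all add: B1_def pdo_def)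
    then show ?thesis
      using B0_B1_identity_small[OF \<open>0 < K\<close> \<open>0 < T\<close>] False k t by simp
  qed
qed

end
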